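(* Let $n$ and $M\ge 2$ be positive integers with $M$ dividing $n$, let $N=n/M$, and let $\lambda>0$. Let $\{X_{c,i,k}: 1\le c\le N,\ 1\le i\le M,\ 1\le k\le M-1\}$ be i.i.d. exponential random variables with rate $\lambda$, and define $$U_{c,i}=\max_{1\le k\le M-1} X_{c,i,k},\qquad V_c=\sum_{i=1}^{M}U_{c,i},\qquad Y_I=\max_{1\le c\le N} V_c .$$ Let $\bar U_1,\dots,\bar U_M$ be i.i.d. random variables, each distributed as the maximum $X_{n:n}$ of $n$ i.i.d. exponential random variables with rate $\lambda$, and set $\bar V=\sum_{i=1}^M \bar U_i$. Then $Y_I\le \bar V$ in the usual stochastic order, i.e. $\Pr(Y_I>t)\le \Pr(\bar V>t)$ for every real $t$.
   Context: Model: $n$ nodes in a fixed square area are divided into $N=n/M$ cells of $M$ nodes each. In Phase I of the transmission scheme, cells operate in parallel; within each cell, each of the $M$ nodes in turn transmits its update packet to the other $M-1$ nodes of its cell, the intra-cell transmission delays being i.i.d. exponential with rate $\lambda$, and a node's transmission is complete when all $M-1$ recipients have received it. Thus $U_{c,i}$ is the time for node $i$ of cell $c$ to distribute its packet, $V_c$ is the time for cell $c$ to finish Phase I, and $Y_I$ (the duration of Phase I) is the time until the slowest cell finishes. For random variables $X_1,\dots,X_n$, $X_{k:n}$ denotes the $k$-th smallest. *)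

theory Defs
  imports "HOL-Probability.Probability"
begin

definition max_exp_law :: "nat \<Rightarrow> real \<Rightarrow> real measure" where
  "max_exp_law n lam =
     distr (PiM {..<n} (\<lambda>_. density lborel (exponential_density lam))) borel
           (\<lambda>x. Max (x ` {..<n}))"

end

(*
  Coupling. Realise an M x n array y(i, j) of i.i.d. exponential delays on one probability space.
  The map (c, i, k) |-> (i, c * M + k) is injective, so the entries it selects have the joint law
  of the X(c, i, k), and Y_I has the law of the Phase I duration computed from them. The row maxima
  max_j y(i, j) are i.i.d. with the law of X_{n:n}, so their sum has the law of V-bar. Row i of
  cell c only reads entries of row i of the array, hence V_c <= sum_i max_j y(i, j) for every c,
  that is Y_I <= V-bar pointwise on the common space.
*)
theory Submission
  imports Defs
begin

lemma (in prob_space) distr_iid_eq_PiM: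
  assumes "indep_vars (\<lambda>_. N) X I" "I \<noteq> {}"
    and "\<And>i. i \<in> I \<Longrightarrow> distr M N (X i) = D"
  shows "distr M (\<Pi>\<^sub>M i\<in>I. N) (\<lambda>\<omega>. \<lambda>i\<in>I. X i \<omega>) = (\<Pi>\<^sub>M i\<in>I. D)"
proof -
  have rv: "\<And>i. i \<in> I \<Longrightarrow> random_variable N (X i)"
    using assms(1) unfolding indep_vars_def by blast
  have "distr M (\<Pi>\<^sub>M i\<in>I. N) (\<lambda>\<omega>. \<lambda>i\<in>I. X i \<omega>) = (\<Pi>\<^sub>M i\<in>I. distr M N (X i))"
    using indep_vars_iff_distr_eq_PiM'[OF assms(2) rv] assms(1) by simp
  also have "\<dots> = (\<Pi>\<^sub>M i\<in>I. D)"
    using assms(3) by (intro PiM_cong) auto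
  finally show ?thesis .
qed

lemma (in prob_space) measurable_restrict_indep_vars:
  assumes "indep_vars N X I"
  shows "(\<lambda>\<omega>. \<lambda>i\<in>I. X i \<omega>) \<in> measurable M (\<Pi>\<^sub>M i\<in>I. N i)"
  using assms unfolding indep_vars_def by (intro measurable_restrict) blast

lemma indep_vars_PiM_components:
  assumes "\<And>i. i \<in> I \<Longrightarrow> prob_space (M i)" "I \<noteq> {}"
  shows "prob_space.indep_vars (Pi\<^sub>M I M) M (\<lambda>i \<omega>. \<omega> i) I"
proof -
  interpret prob_space "Pi\<^sub>M I M"
    using assms(1) by (rule prob_space_PiM)
  have "distr (Pi\<^sub>M I M) (Pi\<^sub>M I M) (\<lambda>\<omega>. \<lambda>i\<in>I. \<omega> i) = Pi\<^sub>M I M"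
    using distr_PiM_reindex[of I M id I] assms(1) by simp
  also have "\<dots> = (\<Pi>\<^sub>M i\<in>I. distr (Pi\<^sub>M I M) (M i) (\<lambda>\<omega>. \<omega> i))"
    using assms(1) by (intro PiM_cong) (auto simp: distr_PiM_component)
  finally show ?thesis
    using indep_vars_iff_distr_eq_PiM'[OF assms(2), where M' = M and X = "\<lambda>i \<omega>. \<omega> i"] by simp
qed

lemma distr_PiM_row_Max:
  fixes E :: "real measure"
  assumes E: "prob_space E" "sets E = sets borel" and J: "finite J" "J \<noteq> {}" and "K \<noteq> {}"
  shows "distr (\<Pi>\<^sub>M ij\<in>K \<times> J. E) (\<Pi>\<^sub>M i\<in>K. borel) (\<lambda>y. \<lambda>i\<in>K. Max ((\<lambda>j. y (i, j)) ` J))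
       = (\<Pi>\<^sub>M i\<in>K. distr (\<Pi>\<^sub>M j\<in>J. E) borel (\<lambda>x. Max (x ` J)))"
proof -
  let ?\<Omega> = "\<Pi>\<^sub>M ij\<in>K \<times> J. E"
  interpret prob_space ?\<Omega>
    using E(1) by (rule prob_space_PiM)
  have Max_measurable: "(\<lambda>x. Max (x ` J)) \<in> borel_measurable (\<Pi>\<^sub>M j\<in>J. E)"
    using J E(2) by measurable
  have "indep_vars (\<lambda>_. E) (\<lambda>ij y. y ij) (K \<times> J)"
    using indep_vars_PiM_components[of "K \<times> J" "\<lambda>_. E"] E(1) J(2) \<open>K \<noteq> {}\<close> by auto
  then have "indep_vars (\<lambda>i. \<Pi>\<^sub>M ij\<in>{i} \<times> J. E) (\<lambda>i y. \<lambda>ij\<in>{i} \<times> J. y ij) K"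
    by (rule indep_vars_restrict) (auto simp: disjoint_family_on_def)
  then have "indep_vars (\<lambda>_. borel) (\<lambda>i y. Max ((\<lambda>j. (\<lambda>ij\<in>{i} \<times> J. y ij) (i, j)) ` J)) K"
    by (rule indep_vars_compose2) (use J E(2) in measurable)
  then have indep: "indep_vars (\<lambda>_. borel) (\<lambda>i y. Max ((\<lambda>j. y (i, j)) ` J)) K"
    by simp
  have "distr ?\<Omega> borel (\<lambda>y. Max ((\<lambda>j. y (i, j)) ` J)) = distr (\<Pi>\<^sub>M j\<in>J. E) borel (\<lambda>x. Max (x ` J))"
    if "i \<in> K" for i
  proof -
    have row: "distr ?\<Omega> (\<Pi>\<^sub>M j\<in>J. E) (\<lambda>y. \<lambda>j\<in>J. y (i, j)) = (\<Pi>\<^sub>M j\<in>J. E)"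
      using distr_PiM_reindex[of "K \<times> J" "\<lambda>_. E" "\<lambda>j. (i, j)" J] E(1) that
      by (auto simp: inj_on_def)
    have "distr ?\<Omega> borel (\<lambda>y. Max ((\<lambda>j. y (i, j)) ` J))
        = distr ?\<Omega> borel ((\<lambda>x. Max (x ` J)) \<circ> (\<lambda>y. \<lambda>j\<in>J. y (i, j)))"
      by (intro distr_cong) auto
    also have "\<dots> = distr (distr ?\<Omega> (\<Pi>\<^sub>M j\<in>J. E) (\<lambda>y. \<lambda>j\<in>J. y (i, j))) borel (\<lambda>x. Max (x ` J))"
      using that
      by (intro distr_distr[symmetric] Max_measurable measurable_restrict measurable_component_singleton)
        auto
    finally show ?thesis
      by (simp only: row)
  qed
  with indep \<open>K \<noteq> {}\<close> show ?thesis
    by (subst distr_iid_eq_PiM) auto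
qed

lemma borel_measurable_PiM_component:
  fixes E :: "real measure"
  assumes "sets E = sets borel" "i \<in> I"
  shows "(\<lambda>x. x i) \<in> borel_measurable (\<Pi>\<^sub>M i\<in>I. E)"
  using measurable_component_singleton[OF assms(2), of "\<lambda>_. E"]
  unfolding measurable_cong_sets[OF refl assms(1)] .

lemma distr_PiM_reindex_borel:
  fixes E :: "real measure"
  assumes "prob_space E" "sets E = sets borel" "inj_on f I" "f \<in> I \<rightarrow> K"
  shows "distr (\<Pi>\<^sub>M k\<in>K. E) (\<Pi>\<^sub>M i\<in>I. borel) (\<lambda>\<omega>. \<lambda>i\<in>I. \<omega> (f i)) = (\<Pi>\<^sub>M i\<in>I. E)"
proof -
  have "distr (\<Pi>\<^sub>M k\<in>K. E) (\<Pi>\<^sub>M i\<in>I. borel) (\<lambda>\<omega>. \<lambda>i\<in>I. \<omega> (f i))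
      = distr (\<Pi>\<^sub>M k\<in>K. E) (\<Pi>\<^sub>M i\<in>I. E) (\<lambda>\<omega>. \<lambda>i\<in>I. \<omega> (f i))"
    by (rule distr_cong) (auto intro!: sets_PiM_cong simp: assms(2))
  also have "\<dots> = (\<Pi>\<^sub>M i\<in>I. E)"
    using assms(1,3,4) by (rule distr_PiM_reindex)
  finally show ?thesis .
qed

lemma distr_compose_eq:
  assumes "f \<in> measurable M N" "g \<in> measurable M' N" "distr M N f = distr M' N g"
    and "h \<in> measurable N K"
  shows "distr M K (\<lambda>x. h (f x)) = distr M' K (\<lambda>x. h (g x))"
  using distr_distr[OF assms(4) assms(1)] distr_distr[OF assms(4) assms(2)] assms(3)
  by (simp add: comp_def)

lemma distributed_distr_borel_eq_density:
  assumes "distributed M lborel X f"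
  shows "distr M borel X = density lborel f"
proof -
  have "distr M borel X = distr M lborel X"
    by (rule distr_cong) simp_all
  then show ?thesis
    using distributed_distr_eq_density[OF assms] by simp
qed

lemma measure_gt_eq_of_distr_eq:
  fixes t :: real
  assumes "Y \<in> borel_measurable M" "Y' \<in> borel_measurable M'" "distr M borel Y = distr M' borel Y'"
  shows "measure M {\<omega> \<in> space M. t < Y \<omega>} = measure M' {\<omega> \<in> space M'. t < Y' \<omega>}"
proof -
  have "measure M {\<omega> \<in> space M. t < Y \<omega>} = measure (distr M borel Y) {t<..}"
    using measure_distr[OF assms(1), of "{t<..}"]
    by (auto intro!: arg_cong[where f = "measure M"])
  also have "\<dots> = measure M' {\<omega> \<in> space M'. t < Y' \<omega>}"
    using measure_distr[OF assms(2), of "{t<..}"] assms(3)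
    by (auto intro!: arg_cong[where f = "measure M'"])
  finally show ?thesis .
qed

lemma inj_on_block_index:
  "inj_on (\<lambda>(c, i, k). (i, c * m + k :: nat)) (C \<times> I \<times> {..<m})"
proof (rule inj_onI, clarsimp)
  fix c i k c' k' assume "k < m" "k' < m" "c * m + k = c' * m + k'"
  then have "(c * m + k) div m = (c' * m + k') div m" "(c * m + k) mod m = (c' * m + k') mod m"
    by simp_all
  with \<open>k < m\<close> \<open>k' < m\<close> show "c = c' \<and> k = k'"
    by simp
qed

lemma mult_add_less_mult:
  fixes c k :: nat
  assumes "c < N" "k < m"
  shows "c * m + k < N * m"
proof -
  have "c * m + k < Suc c * m"
    using assms(2) by simp
  also have "\<dots> \<le> N * m"
    using assms(1) by (intro mult_le_mono1) simp
  finally show ?thesis .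
qed

lemma Max_sum_Max_le_sum_Max:
  fixes y :: "'i \<times> 'j \<Rightarrow> 'a::{linorder, ordered_comm_monoid_add}"
  assumes "finite C" "C \<noteq> {}" "finite K" "K \<noteq> {}" "finite J"
    and "\<And>c k. c \<in> C \<Longrightarrow> k \<in> K \<Longrightarrow> g c k \<in> J"
  shows "(MAX c\<in>C. \<Sum>i\<in>I. MAX k\<in>K. y (i, g c k)) \<le> (\<Sum>i\<in>I. MAX j\<in>J. y (i, j))"
proof (rule Max.boundedI)
  fix s assume "s \<in> (\<lambda>c. \<Sum>i\<in>I. MAX k\<in>K. y (i, g c k)) ` C"
  then obtain c where "c \<in> C" and s: "s = (\<Sum>i\<in>I. MAX k\<in>K. y (i, g c k))" by blast
  have "(MAX k\<in>K. y (i, g c k)) \<le> (MAX j\<in>J. y (i, j))" for i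
  proof -
    have "(\<lambda>k. y (i, g c k)) ` K \<subseteq> (\<lambda>j. y (i, j)) ` J"
      using assms(6) \<open>c \<in> C\<close> by auto
    then show ?thesis
      using assms(3-5) by (intro Max_mono) auto
  qed
  then show "s \<le> (\<Sum>i\<in>I. MAX j\<in>J. y (i, j))"
    unfolding s by (rule sum_mono)
qed (use assms in auto)

definition phase_I_duration :: "nat \<Rightarrow> nat \<Rightarrow> (nat \<times> nat \<times> nat \<Rightarrow> real) \<Rightarrow> real" where
  "phase_I_duration N M x = (MAX c\<in>{..<N}. \<Sum>i<M. MAX k\<in>{..<M - 1}. x (c, i, k))"

lemma phase_I_duration_cong:
  assumes "\<And>c i k. c < N \<Longrightarrow> i < M \<Longrightarrow> k < M - 1 \<Longrightarrow> x (c, i, k) = x' (c, i, k)"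
  shows "phase_I_duration N M x = phase_I_duration N M x'"
  unfolding phase_I_duration_def using assms
  by (auto intro!: arg_cong[where f = Max] image_cong sum.cong)

lemma borel_measurable_phase_I_duration:
  "phase_I_duration N M \<in> borel_measurable (\<Pi>\<^sub>M j\<in>{..<N} \<times> {..<M} \<times> {..<M - 1}. borel)"
  unfolding phase_I_duration_def
  by (intro borel_measurable_Max borel_measurable_sum borel_measurable_PiM_component) auto

lemma phase_I_duration_block_le_sum_row_Max:
  assumes "0 < N" "2 \<le> M"
  shows "phase_I_duration N M (\<lambda>(c, i, k). y (i, c * M + k))
    \<le> (\<Sum>i<M. MAX j\<in>{..<N * M}. y (i, j))"
  unfolding phase_I_duration_def case_prod_conv using assms mult_add_less_mult[of _ N _ M]
  by (intro Max_sum_Max_le_sum_Max) (auto simp: lessThan_empty_iff)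

lemma measure_phase_I_duration_gt_eq_block_embedding:
  fixes X :: "nat \<times> nat \<times> nat \<Rightarrow> 'a \<Rightarrow> real"
  assumes "prob_space P" "0 < lam" "0 < N" "2 \<le> M"
    and indep: "prob_space.indep_vars P (\<lambda>_. borel) X ({..<N} \<times> {..<M} \<times> {..<M - 1})"
    and exponential: "\<And>j. j \<in> {..<N} \<times> {..<M} \<times> {..<M - 1} \<Longrightarrow>
      distributed P lborel (X j) (exponential_density lam)"
  defines "R \<equiv> \<Pi>\<^sub>M ij\<in>{..<M} \<times> {..<N * M}. density lborel (exponential_density lam)"
  shows "measure P {\<omega> \<in> space P. t < phase_I_duration N M (\<lambda>j. X j \<omega>)}
    = measure R {y \<in> space R. t < phase_I_duration N M (\<lambda>(c, i, k). y (i, c * M + k))}"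
proof -
  define I where "I = {..<N} \<times> {..<M} \<times> {..<M - 1}"
  define E where "E = density lborel (exponential_density lam)"
  define embed :: "(nat \<times> nat \<Rightarrow> real) \<Rightarrow> nat \<times> nat \<times> nat \<Rightarrow> real" where
    "embed = (\<lambda>y. \<lambda>j\<in>I. case j of (c, i, k) \<Rightarrow> y (i, c * M + k))"
  have E: "prob_space E" "sets E = sets borel"
    unfolding E_def using \<open>0 < lam\<close> by (auto intro: prob_space_exponential_density)
  have "I \<noteq> {}"
    using assms(3,4) unfolding I_def by (auto simp: lessThan_empty_iff)
  moreover have "distr P borel (X j) = E" if "j \<in> I" for j
    using exponential[OF that[unfolded I_def]] unfolding E_def
    by (rule distributed_distr_borel_eq_density)
  ultimately have law_X: "distr P (\<Pi>\<^sub>M j\<in>I. borel) (\<lambda>\<omega>. \<lambda>j\<in>I. X j \<omega>) = (\<Pi>\<^sub>M j\<in>I. E)"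
    by (rule prob_space.distr_iid_eq_PiM[OF assms(1) indep[folded I_def]])
  have "(\<lambda>(c, i, k). (i, c * M + k)) \<in> I \<rightarrow> {..<M} \<times> {..<N * M}"
    and "inj_on (\<lambda>(c, i, k). (i, c * M + k)) I"
    unfolding I_def using mult_add_less_mult[of _ N _ M]
    by (auto intro: inj_on_subset[OF inj_on_block_index])
  then have law_embed: "distr R (\<Pi>\<^sub>M j\<in>I. borel) embed = (\<Pi>\<^sub>M j\<in>I. E)"
    and embed_meas: "embed \<in> measurable R (\<Pi>\<^sub>M j\<in>I. borel)"
    unfolding R_def E_def[symmetric] embed_def using E
    by (auto simp: case_prod_unfold
        intro!: distr_PiM_reindex_borel measurable_restrict borel_measurable_PiM_component)
  have X_meas: "(\<lambda>\<omega>. \<lambda>j\<in>I. X j \<omega>) \<in> measurable P (\<Pi>\<^sub>M j\<in>I. borel)"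
    using prob_space.measurable_restrict_indep_vars[OF assms(1) indep] unfolding I_def .
  have duration_meas: "phase_I_duration N M \<in> borel_measurable (\<Pi>\<^sub>M j\<in>I. borel)"
    unfolding I_def by (rule borel_measurable_phase_I_duration)
  have "distr P borel (\<lambda>\<omega>. phase_I_duration N M (\<lambda>j\<in>I. X j \<omega>))
      = distr R borel (\<lambda>y. phase_I_duration N M (embed y))"
    by (rule distr_compose_eq[OF X_meas embed_meas _ duration_meas]) (simp only: law_X law_embed)
  then have "measure P {\<omega> \<in> space P. t < phase_I_duration N M (\<lambda>j\<in>I. X j \<omega>)}
      = measure R {y \<in> space R. t < phase_I_duration N M (embed y)}"
    using measurable_compose[OF X_meas duration_meas]
      measurable_compose[OF embed_meas duration_meas]
    by (intro measure_gt_eq_of_distr_eq)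
  moreover have "phase_I_duration N M (\<lambda>j\<in>I. X j \<omega>) = phase_I_duration N M (\<lambda>j. X j \<omega>)" for \<omega>
    unfolding I_def by (rule phase_I_duration_cong) simp
  moreover have "phase_I_duration N M (embed y)
      = phase_I_duration N M (\<lambda>(c, i, k). y (i, c * M + k))" for y
    unfolding embed_def I_def by (rule phase_I_duration_cong) simp
  ultimately show ?thesis
    by simp
qed

lemma measure_sum_gt_eq_sum_row_Max:
  fixes Ub :: "nat \<Rightarrow> 'b \<Rightarrow> real"
  assumes "prob_space Q" "0 < lam" "0 < n" "0 < M"
    and indep: "prob_space.indep_vars Q (\<lambda>_. borel) Ub {..<M}"
    and law: "\<And>i. i < M \<Longrightarrow> distr Q borel (Ub i) = max_exp_law n lam"
  defines "R \<equiv> \<Pi>\<^sub>M ij\<in>{..<M} \<times> {..<n}. density lborel (exponential_density lam)"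
  shows "measure Q {\<omega> \<in> space Q. t < (\<Sum>i<M. Ub i \<omega>)}
    = measure R {y \<in> space R. t < (\<Sum>i<M. MAX j\<in>{..<n}. y (i, j))}"
proof -
  define E where "E = density lborel (exponential_density lam)"
  define row_max where "row_max = (\<lambda>y. \<lambda>i\<in>{..<M}. MAX j\<in>{..<n}. y (i, j) :: real)"
  have E: "prob_space E" "sets E = sets borel"
    unfolding E_def using \<open>0 < lam\<close> by (auto intro: prob_space_exponential_density)
  have M: "{..<M} \<noteq> {}"
    using \<open>0 < M\<close> by (simp add: lessThan_empty_iff)
  have law_U: "distr Q (\<Pi>\<^sub>M i\<in>{..<M}. borel) (\<lambda>\<omega>. \<lambda>i\<in>{..<M}. Ub i \<omega>)
      = (\<Pi>\<^sub>M i\<in>{..<M}. max_exp_law n lam)"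
    using law by (intro prob_space.distr_iid_eq_PiM[OF assms(1) indep M]) simp
  have law_row_max: "distr R (\<Pi>\<^sub>M i\<in>{..<M}. borel) row_max = (\<Pi>\<^sub>M i\<in>{..<M}. max_exp_law n lam)"
    unfolding R_def row_max_def max_exp_law_def E_def[symmetric]
    by (rule distr_PiM_row_Max[OF E finite_lessThan _ M]) (use \<open>0 < n\<close> in auto)
  have row_max_meas: "row_max \<in> measurable R (\<Pi>\<^sub>M i\<in>{..<M}. borel)"
    unfolding row_max_def R_def E_def[symmetric]
    by (intro measurable_restrict borel_measurable_Max borel_measurable_PiM_component[OF E(2)]) auto
  have sum_meas: "(\<lambda>u. \<Sum>i<M. u i :: real) \<in> borel_measurable (\<Pi>\<^sub>M i\<in>{..<M}. borel)"
    by measurable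
  have U_meas: "(\<lambda>\<omega>. \<lambda>i\<in>{..<M}. Ub i \<omega>) \<in> measurable Q (\<Pi>\<^sub>M i\<in>{..<M}. borel)"
    using prob_space.measurable_restrict_indep_vars[OF assms(1) indep] .
  have "distr Q borel (\<lambda>\<omega>. \<Sum>i<M. (\<lambda>i\<in>{..<M}. Ub i \<omega>) i) = distr R borel (\<lambda>y. \<Sum>i<M. row_max y i)"
    by (rule distr_compose_eq[OF U_meas row_max_meas _ sum_meas]) (simp only: law_U law_row_max)
  then have "measure Q {\<omega> \<in> space Q. t < (\<Sum>i<M. (\<lambda>i\<in>{..<M}. Ub i \<omega>) i)}
      = measure R {y \<in> space R. t < (\<Sum>i<M. row_max y i)}"
    using measurable_compose[OF U_meas sum_meas] measurable_compose[OF row_max_meas sum_meas]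
    by (intro measure_gt_eq_of_distr_eq)
  then show ?thesis
    unfolding row_max_def by simp
qed

theorem lemma1:
  fixes P :: "'a measure" and Q :: "'b measure"
    and n M :: nat and lam :: real
    and X :: "nat \<times> nat \<times> nat \<Rightarrow> 'a \<Rightarrow> real"
    and Ub :: "nat \<Rightarrow> 'b \<Rightarrow> real"
  assumes "0 < n" and "2 \<le> M" and "M dvd n" and "0 < lam"
    and "prob_space P" and "prob_space Q"
    and "prob_space.indep_vars P (\<lambda>_. borel) X ({..<n div M} \<times> {..<M} \<times> {..<M - 1})"
    and "\<And>j. j \<in> {..<n div M} \<times> {..<M} \<times> {..<M - 1} \<Longrightarrow>
            distributed P lborel (X j) (exponential_density lam)"
    and "prob_space.indep_vars Q (\<lambda>_. borel) Ub {..<M}"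
    and "\<And>i. i < M \<Longrightarrow> distr Q borel (Ub i) = max_exp_law n lam"
  shows "measure P {\<omega> \<in> space P.
            (MAX c\<in>{..<n div M}. \<Sum>i<M. MAX k\<in>{..<M - 1}. X (c, i, k) \<omega>) > t}
         \<le> measure Q {\<omega> \<in> space Q. (\<Sum>i<M. Ub i \<omega>) > t}"
proof -
  define N where "N = n div M"
  define R where "R = (\<Pi>\<^sub>M ij\<in>{..<M} \<times> {..<n}. density lborel (exponential_density lam))"
  have n: "n = N * M" "0 < N"
    using \<open>M dvd n\<close> \<open>0 < n\<close> unfolding N_def by auto
  interpret R: prob_space R
    unfolding R_def using \<open>0 < lam\<close> by (intro prob_space_PiM prob_space_exponential_density)
  have "measure P {\<omega> \<in> space P. t < phase_I_duration N M (\<lambda>j. X j \<omega>)}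
      = measure R {y \<in> space R. t < phase_I_duration N M (\<lambda>(c, i, k). y (i, c * M + k))}"
    unfolding R_def n(1)
    by (rule measure_phase_I_duration_gt_eq_block_embedding
        [OF assms(5,4) n(2) assms(2) assms(7,8)[folded N_def]])
  also have "\<dots> \<le> measure R {y \<in> space R. t < (\<Sum>i<M. MAX j\<in>{..<n}. y (i, j))}"
  proof (rule R.finite_measure_mono)
    show "{y \<in> space R. t < (\<Sum>i<M. MAX j\<in>{..<n}. y (i, j))} \<in> sets R"
      unfolding R_def by measurable
    show "{y \<in> space R. t < phase_I_duration N M (\<lambda>(c, i, k). y (i, c * M + k))}
        \<subseteq> {y \<in> space R. t < (\<Sum>i<M. MAX j\<in>{..<n}. y (i, j))}"
      using phase_I_duration_block_le_sum_row_Max[OF n(2) assms(2), folded n(1)]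
      by (blast intro: order.strict_trans2)
  qed
  also have "\<dots> = measure Q {\<omega> \<in> space Q. t < (\<Sum>i<M. Ub i \<omega>)}"
    unfolding R_def using \<open>0 < n\<close> \<open>2 \<le> M\<close>
    by (intro measure_sum_gt_eq_sum_row_Max[symmetric] assms(4,6,9,10)) auto
  finally show ?thesis
    unfolding phase_I_duration_def N_def .
qed

end
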